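(* If $T\in\mathcal{T}_3$ has $n\ge 4$ vertices and $t$ twigs then $\mu(T)<\frac{3n}{4}-\frac{2t}{5}$.
   Context: A leaf is a vertex of degree at most 1; an internal vertex has degree at least 2. $\mathcal{T}_3$ is the set of finite trees with at least one internal vertex in which every internal vertex has degree at least 3. A vertex $v$ is a twig if $d(v)\ge 2$ and at least $d(v)-1$ of its neighbours are leaves. A subtree is a nonempty vertex set inducing a connected subgraph; $\mu(T)$ is the average number of vertices over all subtrees of $T$. *)

theory Defs
  imports Complex_Main
begin

definition simple_graph :: "'a set \<Rightarrow> ('a \<Rightarrow> 'a \<Rightarrow> bool) \<Rightarrow> bool" where
  "simple_graph V E \<longleftrightarrow> finite V \<and> (\<forall>u v. E u v \<longrightarrow> E v u) \<and> (\<forall>v. \<not> E v v)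
     \<and> (\<forall>u v. E u v \<longrightarrow> u \<in> V \<and> v \<in> V)"

definition induced_connected :: "('a \<Rightarrow> 'a \<Rightarrow> bool) \<Rightarrow> 'a set \<Rightarrow> bool" where
  "induced_connected E S \<longleftrightarrow>
     (\<forall>u\<in>S. \<forall>v\<in>S. (\<lambda>x y. x \<in> S \<and> y \<in> S \<and> E x y)\<^sup>*\<^sup>* u v)"

definition is_cycle :: "'a set \<Rightarrow> ('a \<Rightarrow> 'a \<Rightarrow> bool) \<Rightarrow> 'a list \<Rightarrow> bool" where
  "is_cycle V E cs \<longleftrightarrow> length cs \<ge> 3 \<and> distinct cs \<and> set cs \<subseteq> V
     \<and> (\<forall>i. Suc i < length cs \<longrightarrow> E (cs ! i) (cs ! Suc i))
     \<and> E (last cs) (hd cs)"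

definition is_tree :: "'a set \<Rightarrow> ('a \<Rightarrow> 'a \<Rightarrow> bool) \<Rightarrow> bool" where
  "is_tree V E \<longleftrightarrow> simple_graph V E \<and> V \<noteq> {} \<and> induced_connected E V
     \<and> (\<nexists>cs. is_cycle V E cs)"

definition degree :: "'a set \<Rightarrow> ('a \<Rightarrow> 'a \<Rightarrow> bool) \<Rightarrow> 'a \<Rightarrow> nat" where
  "degree V E v = card {u \<in> V. E v u}"

definition is_leaf :: "'a set \<Rightarrow> ('a \<Rightarrow> 'a \<Rightarrow> bool) \<Rightarrow> 'a \<Rightarrow> bool" where
  "is_leaf V E v \<longleftrightarrow> degree V E v \<le> 1"

definition is_internal :: "'a set \<Rightarrow> ('a \<Rightarrow> 'a \<Rightarrow> bool) \<Rightarrow> 'a \<Rightarrow> bool" where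
  "is_internal V E v \<longleftrightarrow> degree V E v \<ge> 2"

definition in_T3 :: "'a set \<Rightarrow> ('a \<Rightarrow> 'a \<Rightarrow> bool) \<Rightarrow> bool" where
  "in_T3 V E \<longleftrightarrow> is_tree V E \<and> (\<exists>v\<in>V. is_internal V E v)
     \<and> (\<forall>v\<in>V. is_internal V E v \<longrightarrow> degree V E v \<ge> 3)"

definition is_twig :: "'a set \<Rightarrow> ('a \<Rightarrow> 'a \<Rightarrow> bool) \<Rightarrow> 'a \<Rightarrow> bool" where
  "is_twig V E v \<longleftrightarrow> degree V E v \<ge> 2
     \<and> card {u \<in> V. E v u \<and> is_leaf V E u} \<ge> degree V E v - 1"

definition twigs :: "'a set \<Rightarrow> ('a \<Rightarrow> 'a \<Rightarrow> bool) \<Rightarrow> 'a set" where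
  "twigs V E = {v \<in> V. is_twig V E v}"

definition subtrees :: "'a set \<Rightarrow> ('a \<Rightarrow> 'a \<Rightarrow> bool) \<Rightarrow> 'a set set" where
  "subtrees V E = {S. S \<subseteq> V \<and> S \<noteq> {} \<and> induced_connected E S}"

definition mean_subtree_order :: "'a set \<Rightarrow> ('a \<Rightarrow> 'a \<Rightarrow> bool) \<Rightarrow> real" where
  "mean_subtree_order V E =
     (\<Sum>S\<in>subtrees V E. real (card S)) / real (card (subtrees V E))"

end

theory Submission
  imports Defs
begin

text \<open>Write N(v) for the number of subtrees containing v, so that the orders of all
  subtrees add up to the sum of N(v) over the vertices. Deleting a leaf l from the
  subtrees through l and its parent u shows N(l) = 1 + N(u)/2; hence the total order
  is the number of leaves plus the sum of N(u) (1 + k(u)/2) over the internal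
  vertices u, where k(u) counts the leaves at u. Each such summand is at most
  w(u) = 1 + k(u)/2 + (deg u - 3)/4 - 2/5 [u is a twig] times the number of subtrees:
  for a twig u, with a the number of subtrees avoiding u and its leaves, at most
  2^k(u) (a + 1) subtrees pass through u while at least k(u) + a avoid it. As the
  degrees of a tree sum to 2n - 2, the weights w(u) add up to at most
  3n/4 - 1/2 - 2t/5, and the number of leaves is less than half the number of
  subtrees (already the singletons and the leaf edges are n plus that many).\<close>

lemma induced_connected_singleton [simp]: "induced_connected E {x}"
  unfolding induced_connected_def by auto

lemma induced_connected_has_neighbour:
  assumes "induced_connected E S" "x \<in> S" "y \<in> S" "y \<noteq> x"
  shows "\<exists>z\<in>S. E x z"
proof -
  have "(\<lambda>a b. a \<in> S \<and> b \<in> S \<and> E a b)\<^sup>*\<^sup>* x y"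
    using assms unfolding induced_connected_def by auto
  then show ?thesis
    using \<open>y \<noteq> x\<close> by (cases rule: converse_rtranclpE) auto
qed

lemma induced_connected_neighbour_closed:
  assumes "induced_connected E V" "x \<in> C" "x \<in> V"
    and closed: "\<And>z y. z \<in> C \<Longrightarrow> y \<in> V \<Longrightarrow> E z y \<Longrightarrow> y \<in> C"
  shows "V \<subseteq> C"
proof
  fix y assume "y \<in> V"
  then have "(\<lambda>a b. a \<in> V \<and> b \<in> V \<and> E a b)\<^sup>*\<^sup>* x y"
    using assms unfolding induced_connected_def by auto
  then show "y \<in> C"
    by induction (use \<open>x \<in> C\<close> closed in auto)
qed

lemma induced_connected_insert:
  assumes S: "induced_connected E S" and "u \<in> S" "E u x" "E x u"
  shows "induced_connected E (insert x S)"
proof -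
  let ?R = "\<lambda>a b. a \<in> insert x S \<and> b \<in> insert x S \<and> E a b"
  have in_S: "?R\<^sup>*\<^sup>* a b" if "a \<in> S" "b \<in> S" for a b
  proof -
    have "(\<lambda>a b. a \<in> S \<and> b \<in> S \<and> E a b)\<^sup>*\<^sup>* a b"
      using S that unfolding induced_connected_def by auto
    then show ?thesis
      by (rule rtranclp_mono[THEN predicate2D, rotated]) auto
  qed
  have to_u: "?R\<^sup>*\<^sup>* a u" and from_u: "?R\<^sup>*\<^sup>* u a" if "a \<in> insert x S" for a
    using that in_S[of a u] in_S[of u a] assms by auto
  show ?thesis
    unfolding induced_connected_def using to_u from_u by (meson rtranclp_trans)
qed

text \<open>If every edge from the rest of S into the removed part B starts at one
  vertex c, then a walk in S that enters B must leave it again through c and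
  can be short-cut there.\<close>

lemma induced_connected_Diff:
  assumes S: "induced_connected E S" and "symp E"
    and attach: "\<And>a b. a \<in> S - B \<Longrightarrow> b \<in> S \<inter> B \<Longrightarrow> E a b \<Longrightarrow> a = c"
  shows "induced_connected E (S - B)"
proof -
  let ?R = "\<lambda>a b. a \<in> S \<and> b \<in> S \<and> E a b"
  let ?R' = "\<lambda>a b. a \<in> S - B \<and> b \<in> S - B \<and> E a b"
  have walk: "(z \<notin> B \<longrightarrow> ?R'\<^sup>*\<^sup>* x z) \<and> (z \<in> B \<longrightarrow> ?R'\<^sup>*\<^sup>* x c)"
    if "x \<in> S - B" "?R\<^sup>*\<^sup>* x z" for x z
    using that(2)
  proof induction
    case base
    then show ?case using that(1) by auto
  next
    case (step y z)
    then have "y \<in> S" "z \<in> S" "E y z" "E z y"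
      using \<open>symp E\<close> by (auto dest: sympD)
    then show ?case
      using step.IH attach[of y z] attach[of z y]
      by (cases "y \<in> B"; cases "z \<in> B") (auto intro: rtranclp.rtrancl_into_rtrancl)
  qed
  show ?thesis
    unfolding induced_connected_def
  proof (intro ballI)
    fix u v assume "u \<in> S - B" "v \<in> S - B"
    moreover from this have "?R\<^sup>*\<^sup>* u v"
      using S unfolding induced_connected_def by auto
    ultimately show "?R'\<^sup>*\<^sup>* u v" using walk by auto
  qed
qed

definition is_path :: "'a set \<Rightarrow> ('a \<Rightarrow> 'a \<Rightarrow> bool) \<Rightarrow> 'a list \<Rightarrow> bool" where
  "is_path V E p \<longleftrightarrow> p \<noteq> [] \<and> distinct p \<and> set p \<subseteq> V
     \<and> (\<forall>i. Suc i < length p \<longrightarrow> E (p ! i) (p ! Suc i))"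

lemma length_path_le_card:
  assumes "finite V" "is_path V E p"
  shows "length p \<le> card V"
  using assms distinct_card[of p] card_mono[of V "set p"] unfolding is_path_def by auto

lemma is_path_snoc:
  assumes "is_path V E p" "y \<in> V" "y \<notin> set p" "E (last p) y"
  shows "is_path V E (p @ [y])"
  using assms unfolding is_path_def
  by (auto simp: nth_append last_conv_nth less_Suc_eq) (metis diff_Suc_1 One_nat_def)

lemma is_path_back_edge_is_cycle:
  assumes "is_path V E p" "i + 2 < length p" "E (last p) (p ! i)"
  shows "is_cycle V E (drop i p)"
  using assms set_drop_subset[of i p] unfolding is_path_def is_cycle_def
  by (auto simp: hd_drop_conv_nth add.commute[of i])

text \<open>The last vertex of a longest path has no neighbour off the path, and in an
  acyclic graph none on it except its predecessor.\<close>

lemma acyclic_has_vertex_degree_le_1: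
  assumes "simple_graph V E" "V \<noteq> {}" and acyclic: "\<nexists>cs. is_cycle V E cs"
  shows "\<exists>x\<in>V. degree V E x \<le> 1"
proof -
  have fin: "finite V" and irrefl: "\<And>v. \<not> E v v"
    using \<open>simple_graph V E\<close> unfolding simple_graph_def by auto
  obtain x0 where "x0 \<in> V" using \<open>V \<noteq> {}\<close> by auto
  then have "is_path V E [x0]" unfolding is_path_def by auto
  then obtain p where p: "is_path V E p"
    and longest: "\<And>q. is_path V E q \<Longrightarrow> length q \<le> length p"
    using ex_has_greatest_nat[of "is_path V E" "[x0]" length "Suc (card V)"]
      length_path_le_card[OF fin] by (metis less_Suc_eq_le)
  define n where "n = length p"
  have "p \<noteq> []" "set p \<subseteq> V" using p unfolding is_path_def by auto
  then have last_p: "last p = p ! (n - 1)" "last p \<in> V"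
    by (auto simp: n_def last_conv_nth)
  have "{y\<in>V. E (last p) y} \<subseteq> {p ! (n - 2)}"
  proof
    fix y assume y: "y \<in> {y\<in>V. E (last p) y}"
    have "y \<in> set p"
      using longest[OF is_path_snoc[OF p]] y by fastforce
    then obtain i where i: "i < n" "y = p ! i" by (auto simp: n_def in_set_conv_nth)
    have "i \<noteq> n - 1" using irrefl y i last_p by auto
    moreover have "\<not> i + 2 < n"
      using is_path_back_edge_is_cycle[OF p] acyclic y i by (auto simp: n_def)
    ultimately have "i = n - 2" using i by linarith
    then show "y \<in> {p ! (n - 2)}" using i by simp
  qed
  then have "degree V E (last p) \<le> 1"
    unfolding degree_def using card_mono[of "{p ! (n - 2)}"] by fastforce
  then show ?thesis using last_p by auto
qed

lemma acyclic_degree_sum_le: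
  assumes "simple_graph V E" "V \<noteq> {}" "\<nexists>cs. is_cycle V E cs"
  shows "(\<Sum>v\<in>V. degree V E v) + 2 \<le> 2 * card V"
  using assms
proof (induction "card V" arbitrary: V E rule: less_induct)
  case less
  then have fin: "finite V" and sym: "\<And>u v. E u v \<Longrightarrow> E v u" and irrefl: "\<And>v. \<not> E v v"
    unfolding simple_graph_def by auto
  obtain x where x: "x \<in> V" "degree V E x \<le> 1"
    using acyclic_has_vertex_degree_le_1[OF less.prems] by auto
  define V' where "V' = V - {x}"
  define E' where "E' a b \<longleftrightarrow> E a b \<and> a \<noteq> x \<and> b \<noteq> x" for a b
  show ?case
  proof (cases "V' = {}")
    case True
    then have "V = {x}" using x V'_def by auto
    then show ?thesis using irrefl by (simp add: degree_def)
  next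
    case False
    have "simple_graph V' E'"
      using less.prems(1) unfolding simple_graph_def V'_def E'_def by auto
    moreover have "\<nexists>cs. is_cycle V' E' cs"
    proof
      assume "\<exists>cs. is_cycle V' E' cs"
      then have "\<exists>cs. is_cycle V E cs" unfolding is_cycle_def V'_def E'_def by auto
      then show False using less.prems(3) by blast
    qed
    moreover have "card V' < card V"
      unfolding V'_def using fin x(1) by (rule card_Diff1_less)
    ultimately have IH: "(\<Sum>v\<in>V'. degree V' E' v) + 2 \<le> 2 * card V'"
      using less.hyps False by blast
    have deg: "degree V E v = degree V' E' v + (if E v x then 1 else 0)" if "v \<in> V'" for v
    proof -
      have "{u\<in>V. E v u} = {u\<in>V'. E' v u} \<union> (if E v x then {x} else {})"
        using that x unfolding V'_def E'_def by auto
      moreover have "finite {u\<in>V'. E' v u}" "x \<notin> {u\<in>V'. E' v u}"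
        using fin by (auto simp: V'_def)
      ultimately show ?thesis unfolding degree_def by simp
    qed
    have "(\<Sum>v\<in>V'. if E v x then 1 else 0) = card {v\<in>V'. E v x}"
      using fin sum.inter_filter[of V' "\<lambda>_. 1::nat" "\<lambda>v. E v x"] by (simp add: V'_def)
    also have "{v\<in>V'. E v x} = {u\<in>V. E x u}"
      using sym irrefl by (auto simp: V'_def)
    finally have "(\<Sum>v\<in>V'. if E v x then 1 else 0) = degree V E x"
      by (simp add: degree_def)
    then have "(\<Sum>v\<in>V'. degree V E v) = (\<Sum>v\<in>V'. degree V' E' v) + degree V E x"
      by (simp add: deg sum.distrib)
    moreover have "(\<Sum>v\<in>V. degree V E v) = degree V E x + (\<Sum>v\<in>V'. degree V E v)"
      and "card V = card V' + 1"
      using x fin card_Diff1_less[OF fin x(1)] by (simp_all add: V'_def sum.remove)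
    ultimately show ?thesis using IH x by simp
  qed
qed

lemma neighbours_of_leaf:
  assumes "finite V" "is_leaf V E l" "u \<in> V" "E l u"
  shows "{x\<in>V. E l x} = {u}"
  using assms card_le_Suc0_iff_eq[of "{x\<in>V. E l x}"]
  unfolding is_leaf_def degree_def by auto

lemma card_le_1_subset_singleton:
  assumes "finite A" "card A \<le> 1"
  obtains c where "A \<subseteq> {c}"
proof (cases "A = {}")
  case False
  then obtain c where "c \<in> A" by auto
  then show ?thesis
    using assms that card_le_Suc0_iff_eq by (metis One_nat_def subsetI singletonI)
qed (use that in auto)

lemma sum_card_eq_sum_card_containing:
  assumes "finite V" "finite F" "\<And>S. S \<in> F \<Longrightarrow> S \<subseteq> V"
  shows "(\<Sum>S\<in>F. card S) = (\<Sum>v\<in>V. card {S\<in>F. v \<in> S})"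
proof -
  have "(\<Sum>S\<in>F. card S) = (\<Sum>S\<in>F. card {v\<in>V. v \<in> S})"
    using assms(3) by (intro sum.cong) (auto intro: arg_cong[where f=card])
  also have "\<dots> = (\<Sum>v\<in>V. card {S\<in>F. v \<in> S})"
    using sum.swap_restrict[OF assms(2,1), of "\<lambda>_ _. 1::nat" "\<lambda>S v. v \<in> S"] by simp
  finally show ?thesis .
qed

text \<open>X and Y stand for the numbers of subtrees through and avoiding a twig of degree d
  with k leaf neighbours, and a for those avoiding the twig and its leaves.\<close>

lemma twig_weight_inequality:
  fixes X Y a k d :: nat
  assumes X: "X \<le> 2 ^ k * (a + 1)" and Y: "k + a \<le> Y"
    and "k \<le> d" "d \<le> k + 1" "3 \<le> d" and star: "k = d \<Longrightarrow> a = 0"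
  shows "real X * (1 + real k / 2)
           \<le> (1 + real k / 2 + (real d - 3) / 4 - 2 / 5) * (real X + real Y)"
proof (cases "d \<ge> 5")
  case True
  then have "5 \<le> real d" by simp
  have "real X * (1 + real k / 2) \<le> (real X + real Y) * (1 + real k / 2)"
    by (intro mult_right_mono) auto
  also have "\<dots> \<le> (real X + real Y) * (1 + real k / 2 + (real d - 3) / 4 - 2 / 5)"
    using \<open>5 \<le> real d\<close> by (intro mult_left_mono) (auto simp: field_simps)
  finally show ?thesis by (simp only: mult.commute)
next
  case False
  have X': "real X \<le> 2 ^ k * (real a + 1)" and Y': "real k + real a \<le> real Y"
    using of_nat_mono[OF X, where 'a=real] of_nat_mono[OF Y, where 'a=real]
    by (simp_all add: algebra_simps)
  consider "d = 3" "k = 2" | "d = 3" "k = 3" | "d = 4" "k = 3" | "d = 4" "k = 4"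
    using False assms(3-5) by linarith
  then show ?thesis
    by cases (use X' Y' star in \<open>simp_all add: algebra_simps\<close>)
qed

locale T3_tree =
  fixes V :: "'a set" and E :: "'a \<Rightarrow> 'a \<Rightarrow> bool"
  assumes in_T3: "in_T3 V E"
begin

lemma simple: "simple_graph V E"
  and connected: "induced_connected E V"
  and acyclic: "\<nexists>cs. is_cycle V E cs"
  and nonempty: "V \<noteq> {}"
  using in_T3 unfolding in_T3_def is_tree_def by auto

lemma finite_V: "finite V"
  and symp_E: "symp E"
  and irrefl: "\<not> E v v"
  and adj_in_V: "E u v \<Longrightarrow> u \<in> V" "E u v \<Longrightarrow> v \<in> V"
  using simple unfolding simple_graph_def by (auto intro: sympI)

lemma adj_sym: "E u v \<Longrightarrow> E v u"
  using symp_E by (rule sympD)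

definition internals :: "'a set" where
  "internals = {v\<in>V. is_internal V E v}"

definition leaves :: "'a set" where
  "leaves = {v\<in>V. is_leaf V E v}"

definition leaf_nbrs :: "'a \<Rightarrow> 'a set" where
  "leaf_nbrs u = {v\<in>V. E u v \<and> is_leaf V E v}"

definition leaf_parent :: "'a \<Rightarrow> 'a" where
  "leaf_parent l = (THE u. u \<in> V \<and> E l u)"

definition subtrees_through :: "'a \<Rightarrow> 'a set set" where
  "subtrees_through v = {S\<in>subtrees V E. v \<in> S}"

lemma internal_degree_ge_3: "u \<in> internals \<Longrightarrow> 3 \<le> degree V E u"
  using in_T3 unfolding in_T3_def internals_def by auto

lemma internals_nonempty: "internals \<noteq> {}"
  using in_T3 unfolding in_T3_def internals_def by auto

lemma V_eq_internals_Un_leaves: "V = internals \<union> leaves"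
  and internals_Int_leaves: "internals \<inter> leaves = {}"
  unfolding internals_def leaves_def is_internal_def is_leaf_def by auto

lemma finite_internals: "finite internals" and finite_leaves: "finite leaves"
  using finite_V unfolding internals_def leaves_def by auto

lemma card_V_eq: "card V = card internals + card leaves"
  by (subst V_eq_internals_Un_leaves)
    (rule card_Un_disjoint[OF finite_internals finite_leaves internals_Int_leaves])

lemma sum_V_split: "(\<Sum>v\<in>V. f v) = (\<Sum>v\<in>internals. f v) + (\<Sum>v\<in>leaves. f v)"
  by (subst V_eq_internals_Un_leaves)
    (rule sum.union_disjoint[OF finite_internals finite_leaves internals_Int_leaves])

lemma finite_subtrees: "finite (subtrees V E)"
  using finite_V by (auto simp: subtrees_def intro: finite_subset[of _ "Pow V"])

lemma singleton_in_subtrees: "v \<in> V \<Longrightarrow> {v} \<in> subtrees V E"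
  unfolding subtrees_def by auto

lemma leaf_has_internal_nbr:
  assumes l: "l \<in> leaves"
  shows "\<exists>u\<in>internals. E l u"
proof -
  have lV: "l \<in> V" and leaf_l: "is_leaf V E l" using l by (auto simp: leaves_def)
  obtain u0 where u0: "u0 \<in> internals" using internals_nonempty by auto
  then have "u0 \<in> V" "u0 \<noteq> l"
    using l by (auto simp: internals_def leaves_def is_internal_def is_leaf_def)
  then obtain z where z: "z \<in> V" "E l z"
    using induced_connected_has_neighbour[OF connected lV] by blast
  have "z \<in> internals"
  proof (rule ccontr)
    assume "z \<notin> internals"
    then have "is_leaf V E z" using z by (auto simp: internals_def is_internal_def is_leaf_def)
    then have "{x\<in>V. E z x} = {l}" "{x\<in>V. E l x} = {z}"
      using neighbours_of_leaf[OF finite_V] leaf_l lV z adj_sym by auto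
    then have "V \<subseteq> {l, z}"
      by (intro induced_connected_neighbour_closed[OF connected _ lV]) auto
    then show False
      using u0 \<open>is_leaf V E z\<close> leaf_l \<open>u0 \<in> V\<close>
      by (auto simp: internals_def is_internal_def is_leaf_def)
  qed
  then show ?thesis using z by auto
qed

lemma leaf_parent:
  assumes "l \<in> leaves"
  shows "leaf_parent l \<in> internals" "E l (leaf_parent l)" "{x\<in>V. E l x} = {leaf_parent l}"
proof -
  obtain u where u: "u \<in> internals" "E l u" using leaf_has_internal_nbr[OF assms] by auto
  then have nbrs: "{x\<in>V. E l x} = {u}"
    using assms neighbours_of_leaf[OF finite_V] by (auto simp: leaves_def internals_def)
  then have "leaf_parent l = u"
    unfolding leaf_parent_def by (intro the_equality) auto
  then show "leaf_parent l \<in> internals" "E l (leaf_parent l)" "{x\<in>V. E l x} = {leaf_parent l}"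
    using u nbrs by auto
qed

lemma leaf_parent_unique: "l \<in> leaves \<Longrightarrow> x \<in> V \<Longrightarrow> E l x \<Longrightarrow> x = leaf_parent l"
  using leaf_parent(3) by blast

lemma leaf_parent_neq: "l \<in> leaves \<Longrightarrow> leaf_parent l \<noteq> l"
  using leaf_parent(2) irrefl by metis

lemma leaf_nbrs_eq: "leaf_nbrs u = {l\<in>leaves. leaf_parent l = u}"
proof (intro equalityI subsetI)
  fix l assume "l \<in> leaf_nbrs u"
  then have "l \<in> leaves" "u \<in> V" "E l u"
    using adj_in_V adj_sym by (auto simp: leaf_nbrs_def leaves_def)
  then show "l \<in> {l\<in>leaves. leaf_parent l = u}"
    using leaf_parent_unique by auto
next
  fix l assume "l \<in> {l\<in>leaves. leaf_parent l = u}"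
  then show "l \<in> leaf_nbrs u"
    using leaf_parent(2)[of l] adj_sym by (auto simp: leaf_nbrs_def leaves_def)
qed

text \<open>Removing l is a bijection from the subtrees through l and its parent u onto
  those through u but not l, and {l} is the only other subtree through l.\<close>

lemma leaf_subtree_count:
  assumes l: "l \<in> leaves"
  shows "2 * card (subtrees_through l) = 2 + card (subtrees_through (leaf_parent l))"
proof -
  define u where "u = leaf_parent l"
  have lV: "l \<in> V" using l by (auto simp: leaves_def)
  have "E l u" "E u l" "u \<noteq> l"
    using leaf_parent(2)[OF l] leaf_parent_neq[OF l] adj_sym by (auto simp: u_def)
  have only_u: "x = u" if "x \<in> V" "E l x" for x
    using leaf_parent_unique[OF l that] by (simp add: u_def)
  define A where "A = {S\<in>subtrees V E. u \<in> S \<and> l \<in> S}"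
  define B where "B = {S\<in>subtrees V E. u \<in> S \<and> l \<notin> S}"
  have "subtrees_through l = insert {l} A"
  proof (intro equalityI subsetI)
    fix S assume S: "S \<in> subtrees_through l"
    then have "S \<subseteq> V" "induced_connected E S" "l \<in> S" by (auto simp: subtrees_through_def subtrees_def)
    then have "S = {l} \<or> u \<in> S"
      using induced_connected_has_neighbour[of E S l] only_u by blast
    then show "S \<in> insert {l} A" using S by (auto simp: A_def subtrees_through_def)
  qed (use singleton_in_subtrees[OF lV] in \<open>auto simp: A_def subtrees_through_def\<close>)
  moreover have "{l} \<notin> A" using \<open>u \<noteq> l\<close> by (auto simp: A_def)
  moreover have "subtrees_through u = A \<union> B" "A \<inter> B = {}"
    by (auto simp: A_def B_def subtrees_through_def)
  moreover have "finite A" "finite B" using finite_subtrees by (auto simp: A_def B_def)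
  moreover have "bij_betw (\<lambda>S. S - {l}) A B"
  proof (rule bij_betw_byWitness[where f'="insert l"])
    show "(\<lambda>S. S - {l}) ` A \<subseteq> B"
    proof clarify
      fix S assume S: "S \<in> A"
      then have "S \<subseteq> V" "induced_connected E S" by (auto simp: A_def subtrees_def)
      then have "induced_connected E (S - {l})"
        using only_u adj_sym by (intro induced_connected_Diff[OF _ symp_E, of _ _ u]) auto
      then show "S - {l} \<in> B" using S \<open>u \<noteq> l\<close> \<open>S \<subseteq> V\<close> by (auto simp: A_def B_def subtrees_def)
    qed
    show "insert l ` B \<subseteq> A"
      using induced_connected_insert[of E _ u l] \<open>E u l\<close> \<open>E l u\<close> lV
      by (auto simp: A_def B_def subtrees_def)
  qed (auto simp: A_def B_def)
  then have "card A = card B" by (rule bij_betw_same_card)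
  ultimately show ?thesis by (simp add: u_def card_Un_disjoint)
qed

lemma twice_card_leaves_less_card_subtrees: "2 * card leaves < card (subtrees V E)"
proof -
  let ?edge = "\<lambda>l. {l, leaf_parent l}"
  have edges: "?edge ` leaves \<subseteq> subtrees V E"
  proof clarify
    fix l assume l: "l \<in> leaves"
    then have "induced_connected E (insert l {leaf_parent l})"
      using leaf_parent(2)[OF l] adj_sym
      by (intro induced_connected_insert[OF induced_connected_singleton singletonI]) auto
    then show "?edge l \<in> subtrees V E"
      using l leaf_parent(1)[OF l] by (auto simp: subtrees_def leaves_def internals_def)
  qed
  have "inj_on ?edge leaves"
  proof (rule inj_onI)
    fix l l' assume "l \<in> leaves" "l' \<in> leaves" "?edge l = ?edge l'"
    moreover have "l \<noteq> leaf_parent l'"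
      using \<open>l \<in> leaves\<close> leaf_parent(1)[OF \<open>l' \<in> leaves\<close>] internals_Int_leaves by auto
    ultimately show "l = l'" by blast
  qed
  then have "card V + card leaves = card ((\<lambda>v. {v}) ` V \<union> ?edge ` leaves)"
    using finite_V finite_leaves leaf_parent_neq
    by (subst card_Un_disjoint) (auto simp: card_image doubleton_eq_iff)
  also have "\<dots> \<le> card (subtrees V E)"
    using edges singleton_in_subtrees by (intro card_mono[OF finite_subtrees]) auto
  finally have "card V + card leaves \<le> card (subtrees V E)" .
  moreover have "card internals > 0"
    using internals_nonempty finite_internals by (simp add: card_gt_0_iff)
  ultimately show ?thesis using card_V_eq by simp
qed

lemma sum_card_subtrees:
  "real (\<Sum>S\<in>subtrees V E. card S)
     = (\<Sum>u\<in>internals. real (card (subtrees_through u)) * (1 + real (card (leaf_nbrs u)) / 2))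
       + real (card leaves)"
proof -
  let ?N = "\<lambda>v. real (card (subtrees_through v))"
  have "(\<Sum>S\<in>subtrees V E. card S) = (\<Sum>v\<in>V. card (subtrees_through v))"
    unfolding subtrees_through_def
    by (rule sum_card_eq_sum_card_containing[OF finite_V finite_subtrees])
      (auto simp: subtrees_def)
  then have total: "real (\<Sum>S\<in>subtrees V E. card S)
      = (\<Sum>u\<in>internals. ?N u) + (\<Sum>l\<in>leaves. ?N l)"
    by (simp add: sum_V_split)
  have "(\<Sum>l\<in>leaves. ?N l) = (\<Sum>l\<in>leaves. 1 + ?N (leaf_parent l) / 2)"
  proof (rule sum.cong[OF refl])
    fix l assume "l \<in> leaves"
    from leaf_subtree_count[OF this]
    show "?N l = 1 + ?N (leaf_parent l) / 2"
      by (simp add: field_simps flip: of_nat_mult of_nat_add)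
  qed
  also have "\<dots> = real (card leaves) + (\<Sum>l\<in>leaves. ?N (leaf_parent l)) / 2"
    by (simp add: sum.distrib sum_divide_distrib)
  also have "(\<Sum>l\<in>leaves. ?N (leaf_parent l))
      = (\<Sum>u\<in>internals. \<Sum>l\<in>{l\<in>leaves. leaf_parent l = u}. ?N (leaf_parent l))"
    using finite_leaves finite_internals leaf_parent(1)
    by (intro sum.group[symmetric]) auto
  also have "\<dots> = (\<Sum>u\<in>internals. real (card (leaf_nbrs u)) * ?N u)"
    by (intro sum.cong[OF refl]) (simp add: leaf_nbrs_eq)
  finally show ?thesis
    using total by (simp add: algebra_simps sum.distrib sum_divide_distrib)
qed

definition far_subtrees :: "'a \<Rightarrow> 'a set set" where
  "far_subtrees u = {S\<in>subtrees V E. S \<inter> insert u (leaf_nbrs u) = {}}"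

lemma card_leaf_nbrs_le_degree: "card (leaf_nbrs u) \<le> degree V E u"
  unfolding degree_def leaf_nbrs_def using finite_V by (intro card_mono) auto

lemma twig_iff: "is_twig V E u \<longleftrightarrow> 2 \<le> degree V E u \<and> degree V E u - 1 \<le> card (leaf_nbrs u)"
  unfolding is_twig_def leaf_nbrs_def by simp

lemma card_subtrees_split:
  "card (subtrees V E) = card (subtrees_through u) + card {S\<in>subtrees V E. u \<notin> S}"
  unfolding subtrees_through_def using finite_subtrees
  by (subst card_Un_disjoint[symmetric]) (auto intro: arg_cong[where f=card])

text \<open>A subtree through a twig u is u, some of its leaves, and possibly a subtree
  hanging off its only non-leaf neighbour.\<close>

lemma card_subtrees_through_twig:
  assumes u: "u \<in> internals" "is_twig V E u"
  shows "card (subtrees_through u) \<le> 2 ^ card (leaf_nbrs u) * (card (far_subtrees u) + 1)"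
proof -
  define B where "B = insert u (leaf_nbrs u)"
  have uV: "u \<in> V" using u by (auto simp: internals_def)
  have "leaf_nbrs u \<subseteq> {x\<in>V. E u x}" "finite (leaf_nbrs u)"
    using finite_V by (auto simp: leaf_nbrs_def)
  then have "card ({x\<in>V. E u x} - leaf_nbrs u) = degree V E u - card (leaf_nbrs u)"
    by (simp add: card_Diff_subset degree_def)
  also have "\<dots> \<le> 1" using u(2) by (auto simp: twig_iff)
  finally obtain c where c: "{x\<in>V. E u x} - leaf_nbrs u \<subseteq> {c}"
    by (rule card_le_1_subset_singleton[rotated]) (use finite_V in auto)
  have leaf_only_u: "x = u" if "l \<in> leaf_nbrs u" "x \<in> V" "E l x" for l x
    using that uV neighbours_of_leaf[OF finite_V, where l=l] adj_sym
    by (auto simp: leaf_nbrs_def)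
  define f where "f S = (S \<inter> leaf_nbrs u, S - B)" for S
  have "inj_on f (subtrees_through u)"
    by (rule inj_onI) (auto simp: f_def B_def subtrees_through_def)
  moreover have "f ` subtrees_through u \<subseteq> Pow (leaf_nbrs u) \<times> insert {} (far_subtrees u)"
  proof (rule image_subsetI)
    fix S assume S: "S \<in> subtrees_through u"
    then have SV: "S \<subseteq> V" and "induced_connected E S" by (auto simp: subtrees_through_def subtrees_def)
    moreover have "a = c" if "a \<in> S - B" "b \<in> S \<inter> B" "E a b" for a b
      using that c leaf_only_u[of b a] SV adj_sym by (auto simp: B_def)
    ultimately have "induced_connected E (S - B)"
      by (intro induced_connected_Diff[OF _ symp_E]) auto
    then show "f S \<in> Pow (leaf_nbrs u) \<times> insert {} (far_subtrees u)"
      using SV by (auto simp: f_def B_def far_subtrees_def subtrees_def)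
  qed
  moreover have fin: "finite (far_subtrees u)" "finite (leaf_nbrs u)"
    using finite_subtrees finite_V by (auto simp: far_subtrees_def leaf_nbrs_def)
  ultimately have "card (subtrees_through u)
      \<le> card (Pow (leaf_nbrs u) \<times> insert {} (far_subtrees u))"
    by (intro card_inj_on_le) auto
  also have "\<dots> = 2 ^ card (leaf_nbrs u) * (card (far_subtrees u) + 1)"
    using fin by (simp add: card_cartesian_product card_Pow far_subtrees_def subtrees_def)
  finally show ?thesis .
qed

lemma card_subtrees_avoiding:
  "card (leaf_nbrs u) + card (far_subtrees u) \<le> card {S\<in>subtrees V E. u \<notin> S}"
proof -
  let ?singletons = "(\<lambda>x. {x}) ` leaf_nbrs u"
  have sub: "?singletons \<union> far_subtrees u \<subseteq> {S\<in>subtrees V E. u \<notin> S}"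
    using singleton_in_subtrees irrefl by (auto simp: leaf_nbrs_def far_subtrees_def)
  have "?singletons \<inter> far_subtrees u = {}"
    by (auto simp: far_subtrees_def)
  moreover have "finite (leaf_nbrs u)" "finite (far_subtrees u)"
    using finite_V finite_subtrees by (auto simp: leaf_nbrs_def far_subtrees_def)
  ultimately show ?thesis
    using card_mono[OF _ sub] finite_subtrees
    by (simp add: card_Un_disjoint card_image)
qed

lemma far_subtrees_of_star:
  assumes u: "u \<in> V" "card (leaf_nbrs u) = degree V E u"
  shows "far_subtrees u = {}"
proof -
  have nbrs: "leaf_nbrs u = {x\<in>V. E u x}"
    using u finite_V by (intro card_subset_eq) (auto simp: degree_def leaf_nbrs_def)
  have "V \<subseteq> insert u (leaf_nbrs u)"
  proof (rule induced_connected_neighbour_closed[OF connected _ \<open>u \<in> V\<close>])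
    fix z y assume z: "z \<in> insert u (leaf_nbrs u)" and y: "y \<in> V" "E z y"
    show "y \<in> insert u (leaf_nbrs u)"
    proof (cases "z = u")
      case False
      then have "{x\<in>V. E z x} = {u}"
        using z u adj_sym neighbours_of_leaf[OF finite_V, where l=z]
        by (auto simp: leaf_nbrs_def)
      then show ?thesis using y by auto
    qed (use y nbrs in auto)
  qed simp
  then show ?thesis by (auto simp: far_subtrees_def subtrees_def)
qed

definition weight :: "'a \<Rightarrow> real" where
  "weight u = 1 + real (card (leaf_nbrs u)) / 2 + (real (degree V E u) - 3) / 4
     - (if is_twig V E u then 2 / 5 else 0)"

lemma subtrees_through_weight_bound:
  assumes u: "u \<in> internals"
  shows "real (card (subtrees_through u)) * (1 + real (card (leaf_nbrs u)) / 2)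
           \<le> weight u * real (card (subtrees V E))"
proof (cases "is_twig V E u")
  case True
  have "degree V E u \<le> card (leaf_nbrs u) + 1"
    using True by (auto simp: twig_iff)
  moreover have "card (leaf_nbrs u) = degree V E u \<Longrightarrow> card (far_subtrees u) = 0"
    using far_subtrees_of_star u by (auto simp: internals_def)
  ultimately have "real (card (subtrees_through u)) * (1 + real (card (leaf_nbrs u)) / 2)
      \<le> (1 + real (card (leaf_nbrs u)) / 2 + (real (degree V E u) - 3) / 4 - 2 / 5)
        * (real (card (subtrees_through u)) + real (card {S\<in>subtrees V E. u \<notin> S}))"
    by (intro twig_weight_inequality[OF card_subtrees_through_twig[OF u True]
        card_subtrees_avoiding card_leaf_nbrs_le_degree _ internal_degree_ge_3[OF u]])
  then show ?thesis
    using True card_subtrees_split[of u] by (simp add: weight_def)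
next
  case False
  have "real (card (subtrees_through u)) * (1 + real (card (leaf_nbrs u)) / 2)
      \<le> real (card (subtrees V E)) * (1 + real (card (leaf_nbrs u)) / 2)"
    using card_subtrees_split[of u] by (intro mult_right_mono) auto
  also have "\<dots> \<le> real (card (subtrees V E)) * weight u"
    using False internal_degree_ge_3[OF u] by (intro mult_left_mono) (auto simp: weight_def)
  finally show ?thesis by (simp only: mult.commute)
qed

lemma sum_weight_le:
  "(\<Sum>u\<in>internals. weight u)
     \<le> 3 * real (card V) / 4 - 1 / 2 - 2 * real (card (twigs V E)) / 5"
proof -
  let ?k = "\<lambda>u. real (card (leaf_nbrs u))" and ?d = "\<lambda>u. real (degree V E u)"
  let ?twig = "\<lambda>u. if is_twig V E u then 2 / 5 else 0 :: real"
  have "(\<Sum>v\<in>leaves. degree V E v) = (\<Sum>v\<in>leaves. 1)"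
    by (intro sum.cong) (auto simp: degree_def leaf_parent(3))
  then have "(\<Sum>u\<in>internals. degree V E u) + card leaves + 2 \<le> 2 * card V"
    using acyclic_degree_sum_le[OF simple nonempty acyclic] sum_V_split[of "degree V E"] by simp
  from of_nat_mono[OF this, where 'a=real]
  have degrees: "(\<Sum>u\<in>internals. ?d u) + real (card leaves) + 2 \<le> 2 * real (card V)"
    by simp
  have "(\<Sum>u\<in>internals. card (leaf_nbrs u))
      = (\<Sum>u\<in>internals. \<Sum>l\<in>{l\<in>leaves. leaf_parent l = u}. 1)"
    by (simp add: leaf_nbrs_eq)
  also have "\<dots> = card leaves"
    using leaf_parent(1) by (subst sum.group[OF finite_leaves finite_internals]) auto
  finally have leaf_count: "(\<Sum>u\<in>internals. ?k u) = real (card leaves)"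
    by (simp flip: of_nat_sum)
  have "twigs V E = {u\<in>internals. is_twig V E u}"
    by (auto simp: twigs_def internals_def is_twig_def is_internal_def)
  then have twig_count: "(\<Sum>u\<in>internals. ?twig u) = 2 * real (card (twigs V E)) / 5"
    using sum.inter_filter[OF finite_internals, of "\<lambda>_. 2 / 5 :: real" "is_twig V E"] by simp
  have card_V: "real (card V) = real (card internals) + real (card leaves)"
    using card_V_eq by simp
  have "(\<Sum>u\<in>internals. weight u)
      = (\<Sum>u\<in>internals. 1 + ?k u / 2 + (?d u - 3) / 4 - ?twig u)"
    by (simp add: weight_def)
  also have "\<dots> = real (card internals) + (\<Sum>u\<in>internals. ?k u) / 2
      + ((\<Sum>u\<in>internals. ?d u) - 3 * real (card internals)) / 4 - (\<Sum>u\<in>internals. ?twig u)"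
    by (simp add: sum.distrib sum_subtractf sum_divide_distrib[symmetric] algebra_simps)
  finally show ?thesis
    using degrees leaf_count twig_count card_V by argo
qed

lemma mean_subtree_order_less:
  "mean_subtree_order V E < 3 * real (card V) / 4 - 2 * real (card (twigs V E)) / 5"
proof -
  let ?N = "real (card (subtrees V E))" and ?L = "real (card leaves)"
  let ?bound = "3 * real (card V) / 4 - 2 * real (card (twigs V E)) / 5"
  have leaves_small: "2 * ?L < ?N"
    using twice_card_leaves_less_card_subtrees by (simp flip: of_nat_mult of_nat_less_iff)
  have "real (\<Sum>S\<in>subtrees V E. card S) \<le> (\<Sum>u\<in>internals. weight u) * ?N + ?L"
    unfolding sum_card_subtrees sum_distrib_right
    using subtrees_through_weight_bound by (simp add: sum_mono)
  also have "\<dots> \<le> (?bound - 1 / 2) * ?N + ?L"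
    using sum_weight_le by (intro add_right_mono mult_right_mono) auto
  also have "\<dots> < ?bound * ?N"
    using leaves_small by (simp add: algebra_simps)
  finally show ?thesis
    using leaves_small by (simp add: mean_subtree_order_def divide_less_eq of_nat_sum)
qed

end

theorem mainTheorem7:
  fixes V :: "'a set" and E :: "'a \<Rightarrow> 'a \<Rightarrow> bool"
  assumes "in_T3 V E" and "card V \<ge> 4"
  shows "mean_subtree_order V E
           < 3 * real (card V) / 4 - 2 * real (card (twigs V E)) / 5"
proof -
  interpret T3_tree V E using assms(1) by (rule T3_tree.intro)
  show ?thesis by (rule mean_subtree_order_less)
qed

end
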